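(* Let $0<p<1-1/e^2$ be constant, $b=\frac1{1-p}$, and $\gamma(n)=2\log_b n-2\log_b\log_b n-2\log_b 2$. Let $k=k(n)$ be positive integers with $\frac nk-\gamma(n)=O(1)$. Then, as $n\to\infty$, \[\frac{\mu_{n+1,k}}{\mu_{n,k}}=\Theta\left(\frac{\log n}{n}\right).\]
   Context: For $n\in\mathbb{N}$ let $m(n)=\lfloor p\binom n2\rfloor$ and let $X_{n,k}$ be the number of ordered $k$-equipartitions of $[n]$ all of whose parts are independent sets in $G\sim\mathcal{G}(n,m(n))$ (the uniform random graph on $n$ labelled vertices with exactly $m(n)$ edges); here an ordered $k$-equipartition of $[n]$ is an ordered partition into $k$ parts each of size $\lceil n/k\rceil$ or $\lfloor n/k\rfloor$, the larger parts listed first. Let $\mu_{n,k}=\mathbb{E}[X_{n,k}]$; note $\mu_{n+1,k}$ refers to $\mathcal{G}(n+1,m(n+1))$. *)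

theory Defs
  imports "HOL-Probability.Probability" "HOL-Library.Landau_Symbols"
begin

text \<open>Vertex set [n] is rendered as {0..<n}. A graph on [n] is its edge set,
a set of 2-element subsets of {0..<n}.\<close>

definition all_pairs :: "nat \<Rightarrow> nat set set" where
  "all_pairs n = {e. e \<subseteq> {0..<n} \<and> card e = 2}"

definition graphs_nm :: "nat \<Rightarrow> nat \<Rightarrow> nat set set set" where
  "graphs_nm n m = {E. E \<subseteq> all_pairs n \<and> card E = m}"

definition m_edges :: "real \<Rightarrow> nat \<Rightarrow> nat" where
  "m_edges p n = nat \<lfloor>p * real (n choose 2)\<rfloor>"

text \<open>Ordered k-equipartition of [n]: part index function f : [n] \<rightarrow> {0..<k};
part i has size ceil(n/k) for i < n mod k (larger parts first), floor(n/k) otherwise.\<close>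
definition equipartitions :: "nat \<Rightarrow> nat \<Rightarrow> (nat \<Rightarrow> nat) set" where
  "equipartitions n k = {f. (\<forall>v. v \<notin> {0..<n} \<longrightarrow> f v = 0) \<and> f ` {0..<n} \<subseteq> {0..<k} \<and>
     (\<forall>i<k. card {v\<in>{0..<n}. f v = i} = (if i < n mod k then n div k + 1 else n div k))}"

definition parts_independent :: "nat set set \<Rightarrow> (nat \<Rightarrow> nat) \<Rightarrow> bool" where
  "parts_independent E f \<longleftrightarrow> (\<forall>u v. {u, v} \<in> E \<longrightarrow> f u \<noteq> f v)"

definition X_count :: "nat \<Rightarrow> nat \<Rightarrow> nat set set \<Rightarrow> nat" where
  "X_count n k E = card {f \<in> equipartitions n k. parts_independent E f}"

definition mu :: "real \<Rightarrow> nat \<Rightarrow> nat \<Rightarrow> real" where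
  "mu p n k = measure_pmf.expectation (pmf_of_set (graphs_nm n (m_edges p n)))
                (\<lambda>E. real (X_count n k E))"

definition gamma_fn :: "real \<Rightarrow> nat \<Rightarrow> real" where
  "gamma_fn p n = (let b = 1 / (1 - p) in
     2 * log b (real n) - 2 * log b (log b (real n)) - 2 * log b 2)"

end

theory Submission
  imports Defs "HOL-Real_Asymp.Real_Asymp"
begin

(* The expectation factorises as mu(n,k) = |P(n,k)| * C(M - N, m) / C(M, m), where P(n,k) is the set
   of ordered k-equipartitions, M = C(n,2), m = m(n) and N is the number of pairs inside parts: an
   equipartition is independent exactly when none of its N internal pairs is an edge.
   Going from n to n + 1, with q = floor(n/k), the new vertex joins part n mod k, so double counting
   gives |P(n+1,k)| / |P(n,k)| = (n+1)/(q+1), and N grows by q. Writing the binomial ratio as the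
   product of the N factors (M - m - i)/(M - i), the first N factors move only by a relative
   O(q/n^2) when n grows, while each of the q new factors is (1 - p)(1 + O(q/n)); as q = O(log n),
   the binomial ratio changes by a factor Theta((1 - p)^q). Finally q = gamma(n) + O(1) gives
   (1 - p)^q = Theta((log n / n)^2) and (n+1)/(q+1) = Theta(n / log n). *)

section \<open>Counting equipartitions\<close>

definition part_card :: "nat \<Rightarrow> (nat \<Rightarrow> nat) \<Rightarrow> nat \<Rightarrow> nat" where
  "part_card n f i = card {v\<in>{0..<n}. f v = i}"

definition part_size :: "nat \<Rightarrow> nat \<Rightarrow> nat \<Rightarrow> nat" where
  "part_size n k i = (if i < n mod k then n div k + 1 else n div k)"

lemma sum_card_filter_swap:
  assumes "finite A" "finite B"
  shows "(\<Sum>x\<in>A. card {y\<in>B. R x y}) = (\<Sum>y\<in>B. card {x\<in>A. R x y})"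
proof -
  have "(\<Sum>x\<in>A. card {y\<in>B. R x y}) = (\<Sum>x\<in>A. \<Sum>y\<in>B. if R x y then 1 else 0)"
    using assms by (simp add: sum.If_cases Int_def)
  also have "\<dots> = (\<Sum>y\<in>B. card {x\<in>A. R x y})"
    using assms by (subst sum.swap) (simp add: sum.If_cases Int_def)
  finally show ?thesis .
qed

lemma equipartitions_iff:
  "f \<in> equipartitions n k \<longleftrightarrow>
     (\<forall>v\<ge>n. f v = 0) \<and> (\<forall>v<n. f v < k) \<and> (\<forall>i<k. part_card n f i = part_size n k i)"
  unfolding equipartitions_def part_card_def part_size_def image_subset_iff atLeastLessThan_iff
  by (auto simp: not_le)

lemma finite_equipartitions: "finite (equipartitions n k)"
proof (rule finite_subset)
  show "equipartitions n k \<subseteq> {f. \<forall>v. (v \<in> {0..<n} \<longrightarrow> f v \<in> {0..<k}) \<and> (v \<notin> {0..<n} \<longrightarrow> f v = 0)}"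
    by (auto simp: equipartitions_iff)
  show "finite {f. \<forall>v. (v \<in> {0..<n} \<longrightarrow> f v \<in> {0..<k}) \<and> (v \<notin> {0..<n} \<longrightarrow> f v = (0::nat))}"
    by (rule finite_set_of_finite_funs) auto
qed

lemma part_card_Suc: "part_card (Suc n) g i = part_card n g i + (if g n = i then 1 else 0)"
proof -
  have "{v\<in>{0..<Suc n}. g v = i} = (if g n = i then insert n else id) {v\<in>{0..<n}. g v = i}"
    by (auto simp: less_Suc_eq)
  then show ?thesis unfolding part_card_def by simp
qed

lemma part_size_Suc:
  assumes "i < k"
  shows "part_size (Suc n) k i = part_size n k i + (if i = n mod k then 1 else 0)"
proof (cases "Suc (n mod k) = k")
  case True
  then have "Suc n mod k = 0" "Suc n div k = Suc (n div k)"
    using assms by (simp_all add: mod_Suc div_Suc)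
  then show ?thesis using True assms unfolding part_size_def by auto
next
  case False
  then have "Suc n mod k = Suc (n mod k)" "Suc n div k = n div k"
    using assms by (simp_all add: mod_Suc div_Suc)
  then show ?thesis using False assms unfolding part_size_def by auto
qed

lemma equipartition_extend_iff:
  assumes "0 < k" and "\<forall>v\<ge>n. f v = 0"
  shows "f(n := n mod k) \<in> equipartitions (Suc n) k \<longleftrightarrow> f \<in> equipartitions n k"
proof -
  have "part_card n (f(n := n mod k)) i = part_card n f i" for i
    unfolding part_card_def by (rule arg_cong[where f = card]) auto
  then have "part_card (Suc n) (f(n := n mod k)) i = part_card n f i + (if i = n mod k then 1 else 0)" for i
    by (simp add: part_card_Suc)
  then have "(\<forall>i<k. part_card (Suc n) (f(n := n mod k)) i = part_size (Suc n) k i)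
             \<longleftrightarrow> (\<forall>i<k. part_card n f i = part_size n k i)"
    by (simp add: part_size_Suc)
  moreover have "(\<forall>v<Suc n. (f(n := n mod k)) v < k) \<longleftrightarrow> (\<forall>v<n. f v < k)"
    using assms(1) by (auto simp: less_Suc_eq)
  ultimately show ?thesis
    using assms(2) by (auto simp: equipartitions_iff)
qed

lemma card_equipartitions_last_part:
  assumes "0 < k"
  shows "card {g \<in> equipartitions (Suc n) k. g n = n mod k} = card (equipartitions n k)"
proof -
  have "bij_betw (\<lambda>f. f(n := n mod k)) (equipartitions n k) {g \<in> equipartitions (Suc n) k. g n = n mod k}"
  proof (rule bij_betw_byWitness[where f' = "\<lambda>g. g(n := 0)"])
    show "\<forall>f\<in>equipartitions n k. (f(n := n mod k))(n := 0) = f"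
      by (auto simp: equipartitions_iff)
    show "\<forall>g\<in>{g \<in> equipartitions (Suc n) k. g n = n mod k}. (g(n := 0))(n := n mod k) = g"
      by auto
    show "(\<lambda>f. f(n := n mod k)) ` equipartitions n k \<subseteq> {g \<in> equipartitions (Suc n) k. g n = n mod k}"
    proof (rule image_subsetI)
      fix f assume "f \<in> equipartitions n k"
      then show "f(n := n mod k) \<in> {g \<in> equipartitions (Suc n) k. g n = n mod k}"
        using equipartition_extend_iff[OF assms, where n = n and f = f] by (simp add: equipartitions_iff)
    qed
    show "(\<lambda>g. g(n := 0)) ` {g \<in> equipartitions (Suc n) k. g n = n mod k} \<subseteq> equipartitions n k"
    proof (rule image_subsetI)
      fix g assume g: "g \<in> {g \<in> equipartitions (Suc n) k. g n = n mod k}"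
      then have "\<forall>v\<ge>n. (g(n := 0)) v = 0" by (auto simp: equipartitions_iff)
      moreover have "(g(n := 0))(n := n mod k) = g" using g by auto
      ultimately show "g(n := 0) \<in> equipartitions n k"
        using g equipartition_extend_iff[OF assms, where n = n and f = "g(n := 0)"] by simp
    qed
  qed
  then show ?thesis by (simp add: bij_betw_same_card)
qed

lemma equipartition_comp_transpose:
  assumes "g \<in> equipartitions n k" "v < n" "w < n"
  shows "g \<circ> Transposition.transpose v w \<in> equipartitions n k"
proof -
  let ?t = "Transposition.transpose v w"
  have t_less: "?t x < n \<longleftrightarrow> x < n" for x
    using assms(2,3) by (cases "x = v"; cases "x = w") auto
  have "part_card n (g \<circ> ?t) i = part_card n g i" for i
  proof -
    have "{x\<in>{0..<n}. g (?t x) = i} = ?t ` {y\<in>{0..<n}. g y = i}"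
      by (rule set_eqI)
        (simp only: in_transpose_image_iff mem_Collect_eq atLeastLessThan_iff le0 t_less simp_thms)
    then show ?thesis
      unfolding part_card_def comp_apply by (simp only: card_image inj_on_transpose)
  qed
  moreover have "?t x = x" if "n \<le> x" for x
    using assms(2,3) that by simp
  ultimately show ?thesis
    using assms(1) t_less unfolding equipartitions_iff comp_apply by metis
qed

lemma card_equipartitions_vertex_in_part:
  assumes "v < n" "w < n"
  shows "card {g \<in> equipartitions n k. g v = i} = card {g \<in> equipartitions n k. g w = i}"
proof -
  let ?t = "Transposition.transpose v w"
  have "bij_betw (\<lambda>g. g \<circ> ?t) {g \<in> equipartitions n k. g v = i} {g \<in> equipartitions n k. g w = i}"
    by (rule bij_betw_byWitness[where f' = "\<lambda>g. g \<circ> ?t"])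
      (auto simp: comp_assoc equipartition_comp_transpose assms)
  then show ?thesis by (rule bij_betw_same_card)
qed

lemma card_equipartitions_Suc:
  assumes "0 < k"
  shows "card (equipartitions (Suc n) k) * (n div k + 1) = card (equipartitions n k) * Suc n"
proof -
  let ?E = "equipartitions (Suc n) k" and ?j = "n mod k"
  have "part_card (Suc n) g ?j = n div k + 1" if "g \<in> ?E" for g
    using that assms part_size_Suc[of ?j k n] by (simp add: equipartitions_iff part_size_def)
  then have "card ?E * (n div k + 1) = (\<Sum>g\<in>?E. card {v\<in>{0..<Suc n}. g v = ?j})"
    by (simp add: part_card_def)
  also have "\<dots> = (\<Sum>v\<in>{0..<Suc n}. card {g\<in>?E. g v = ?j})"
    by (rule sum_card_filter_swap) (simp_all add: finite_equipartitions)
  also have "\<dots> = (\<Sum>v\<in>{0..<Suc n}. card (equipartitions n k))"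
    using card_equipartitions_vertex_in_part[of _ "Suc n" n k ?j]
      card_equipartitions_last_part[OF assms, of n] by simp
  finally show ?thesis by simp
qed

lemma card_equipartitions_pos:
  assumes "0 < k"
  shows "0 < card (equipartitions n k)"
proof (induction n)
  case 0
  have "(\<lambda>_. 0) \<in> equipartitions 0 k" by (simp add: equipartitions_iff part_card_def part_size_def)
  then show ?case using finite_equipartitions card_gt_0_iff by blast
next
  case (Suc n)
  then show ?case using card_equipartitions_Suc[OF assms, of n] by (metis mult_is_0 nat.distinct(1) neq0_conv)
qed

section \<open>The expectation as an avoidance probability\<close>

definition same_part_pairs :: "nat \<Rightarrow> (nat \<Rightarrow> nat) \<Rightarrow> nat set set" where
  "same_part_pairs n f = {e \<in> all_pairs n. \<forall>u\<in>e. \<forall>v\<in>e. f u = f v}"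

definition intra_part_pairs :: "nat \<Rightarrow> nat \<Rightarrow> nat" where
  "intra_part_pairs n k = (\<Sum>i<k. part_size n k i choose 2)"

lemma Suc_choose_two: "Suc n choose 2 = (n choose 2) + n"
  by (simp add: numeral_2_eq_2)

lemma two_mult_choose_two: "2 * (n choose 2) = n * (n - 1)"
proof (induction n)
  case (Suc n)
  then show ?case by (cases n) (simp_all add: Suc_choose_two algebra_simps)
qed simp

lemma intra_part_pairs_Suc:
  assumes "0 < k"
  shows "intra_part_pairs (Suc n) k = intra_part_pairs n k + n div k"
proof -
  have "intra_part_pairs (Suc n) k
      = (\<Sum>i<k. (part_size n k i choose 2) + (if i = n mod k then part_size n k i else 0))"
    unfolding intra_part_pairs_def by (intro sum.cong) (auto simp: part_size_Suc Suc_choose_two)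
  also have "\<dots> = intra_part_pairs n k + part_size n k (n mod k)"
    using assms by (simp add: sum.distrib intra_part_pairs_def)
  finally show ?thesis by (simp add: part_size_def)
qed

lemma sum_part_size:
  assumes "0 < k"
  shows "(\<Sum>i<k. part_size n k i) = n"
proof -
  have "(\<Sum>i<k. part_size n k i) = (\<Sum>i<k. n div k + (if i < n mod k then 1 else 0))"
    unfolding part_size_def by (rule sum.cong) auto
  also have "\<dots> = k * (n div k) + card {i \<in> {..<k}. i < n mod k}"
    by (simp add: sum.distrib sum.If_cases Int_def)
  also have "{i \<in> {..<k}. i < n mod k} = {..<n mod k}"
    using mod_less_divisor[OF assms, of n] by auto
  finally show ?thesis by simp
qed

lemma intra_part_pairs_le:
  assumes "0 < k"
  shows "2 * intra_part_pairs n k \<le> n * (n div k)"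
proof -
  have "2 * (part_size n k i choose 2) \<le> part_size n k i * (n div k)" for i
  proof -
    have "2 * (part_size n k i choose 2) = part_size n k i * (part_size n k i - 1)"
      by (rule two_mult_choose_two)
    also have "\<dots> \<le> part_size n k i * (n div k)" by (intro mult_left_mono) (auto simp: part_size_def)
    finally show ?thesis .
  qed
  then have "2 * intra_part_pairs n k \<le> (\<Sum>i<k. part_size n k i) * (n div k)"
    unfolding intra_part_pairs_def sum_distrib_left sum_distrib_right by (rule sum_mono)
  then show ?thesis by (simp add: sum_part_size[OF assms])
qed

lemma finite_all_pairs: "finite (all_pairs n)"
  unfolding all_pairs_def by auto

lemma card_all_pairs: "card (all_pairs n) = n choose 2"
  unfolding all_pairs_def using n_subsets[of "{0..<n}" 2] by simp

lemma card_same_part_pairs: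
  assumes "f \<in> equipartitions n k"
  shows "card (same_part_pairs n f) = intra_part_pairs n k"
proof -
  define P where "P i = {v\<in>{0..<n}. f v = i}" for i
  define pairs_in where "pairs_in i = {e. e \<subseteq> P i \<and> card e = 2}" for i
  have "same_part_pairs n f = (\<Union>i<k. pairs_in i)"
  proof (intro equalityI subsetI)
    fix e assume "e \<in> same_part_pairs n f"
    then have sub: "e \<subseteq> {0..<n}" and two: "card e = 2" and same: "\<forall>u\<in>e. \<forall>v\<in>e. f u = f v"
      unfolding same_part_pairs_def all_pairs_def by blast+
    from two obtain u where u: "u \<in> e" by (auto simp: card_2_iff)
    then have "f u < k" using assms sub by (auto simp: equipartitions_iff)
    moreover have "e \<in> pairs_in (f u)" using sub same u two unfolding pairs_in_def P_def by blast
    ultimately show "e \<in> (\<Union>i<k. pairs_in i)" by blast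
  qed (auto simp: same_part_pairs_def all_pairs_def pairs_in_def P_def)
  moreover have "pairs_in i \<inter> pairs_in j = {}" if "i \<noteq> j" for i j
  proof -
    have "P i \<inter> P j = {}" using that by (auto simp: P_def)
    show ?thesis
    proof (rule ccontr)
      assume "pairs_in i \<inter> pairs_in j \<noteq> {}"
      then obtain e where "e \<subseteq> P i" "e \<subseteq> P j" "card e = 2" unfolding pairs_in_def by blast
      with \<open>P i \<inter> P j = {}\<close> show False by (metis card.empty inf.boundedI subset_empty zero_neq_numeral)
    qed
  qed
  moreover have "card (pairs_in i) = part_size n k i choose 2" if "i < k" for i
    using assms that n_subsets[of "P i" 2]
    by (simp add: equipartitions_iff part_card_def P_def pairs_in_def)
  moreover have "finite (pairs_in i)" for i
    by (rule finite_subset[of _ "Pow (P i)"]) (auto simp: pairs_in_def P_def)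
  ultimately show ?thesis
    unfolding intra_part_pairs_def by (simp add: card_UN_disjoint)
qed

lemma parts_independent_iff_disjoint:
  assumes "E \<subseteq> all_pairs n"
  shows "parts_independent E f \<longleftrightarrow> E \<inter> same_part_pairs n f = {}"
proof
  assume indep: "parts_independent E f"
  show "E \<inter> same_part_pairs n f = {}"
  proof (rule ccontr)
    assume "E \<inter> same_part_pairs n f \<noteq> {}"
    then obtain e where e: "e \<in> E" "e \<in> same_part_pairs n f" by blast
    then have "card e = 2" unfolding same_part_pairs_def all_pairs_def by blast
    then obtain u v where "e = {u, v}" by (meson card_2_iff)
    then show False
      using e indep unfolding parts_independent_def same_part_pairs_def by blast
  qed
next
  assume disj: "E \<inter> same_part_pairs n f = {}"
  show "parts_independent E f"
    unfolding parts_independent_def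
  proof (intro allI impI notI)
    fix u v assume "{u, v} \<in> E" "f u = f v"
    then have "{u, v} \<in> E \<inter> same_part_pairs n f"
      using assms unfolding same_part_pairs_def by auto
    with disj show False by blast
  qed
qed

lemma finite_graphs_nm: "finite (graphs_nm n m)"
  unfolding graphs_nm_def by (rule finite_subset[of _ "Pow (all_pairs n)"]) (auto simp: finite_all_pairs)

lemma card_graphs_nm: "card (graphs_nm n m) = (n choose 2) choose m"
  unfolding graphs_nm_def using n_subsets[OF finite_all_pairs, of n m] by (simp add: card_all_pairs)

lemma card_independent_graphs:
  assumes "f \<in> equipartitions n k"
  shows "card {E \<in> graphs_nm n m. parts_independent E f} = ((n choose 2) - intra_part_pairs n k) choose m"
proof -
  have "{E \<in> graphs_nm n m. parts_independent E f} = {E. E \<subseteq> all_pairs n - same_part_pairs n f \<and> card E = m}"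
    unfolding graphs_nm_def using parts_independent_iff_disjoint[of _ n f] by blast
  moreover have "card (all_pairs n - same_part_pairs n f) = (n choose 2) - intra_part_pairs n k"
    using card_same_part_pairs[OF assms]
    by (simp add: card_Diff_subset finite_all_pairs card_all_pairs same_part_pairs_def
        finite_subset[OF _ finite_all_pairs])
  ultimately show ?thesis using n_subsets[of "all_pairs n - same_part_pairs n f" m]
    by (simp add: finite_all_pairs)
qed

lemma sum_X_count:
  "(\<Sum>E\<in>graphs_nm n m. X_count n k E)
     = card (equipartitions n k) * (((n choose 2) - intra_part_pairs n k) choose m)"
proof -
  have "(\<Sum>E\<in>graphs_nm n m. X_count n k E)
      = (\<Sum>f\<in>equipartitions n k. card {E \<in> graphs_nm n m. parts_independent E f})"
    unfolding X_count_def by (rule sum_card_filter_swap[OF finite_graphs_nm finite_equipartitions])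
  then show ?thesis by (simp add: card_independent_graphs)
qed

definition avoid_prob :: "real \<Rightarrow> nat \<Rightarrow> nat \<Rightarrow> real" where
  "avoid_prob p n N =
     real (((n choose 2) - N) choose m_edges p n) / real ((n choose 2) choose m_edges p n)"

lemma m_edges_le: "0 \<le> p \<Longrightarrow> p \<le> 1 \<Longrightarrow> m_edges p n \<le> n choose 2"
  unfolding m_edges_def using mult_left_le_one_le[of "real (n choose 2)" p] by (simp add: nat_le_iff floor_le_iff)

lemma mu_eq_avoid_prob:
  assumes "0 \<le> p" "p \<le> 1"
  shows "mu p n k = real (card (equipartitions n k)) * avoid_prob p n (intra_part_pairs n k)"
proof -
  let ?G = "graphs_nm n (m_edges p n)"
  have "?G \<noteq> {}"
    using m_edges_le[OF assms, of n] card_graphs_nm[of n "m_edges p n"] by (auto simp: card_eq_0_iff)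
  then have "mu p n k = (\<Sum>E\<in>?G. real (X_count n k E)) / real (card ?G)"
    unfolding mu_def by (rule integral_pmf_of_set[OF _ finite_graphs_nm])
  then show ?thesis
    unfolding of_nat_sum[symmetric] sum_X_count card_graphs_nm avoid_prob_def by simp
qed

section \<open>Estimating the avoidance probability\<close>

lemma choose_pred_ratio:
  assumes "m < a"
  shows "real ((a - 1) choose m) / real (a choose m) = (real a - real m) / real a"
proof -
  have "real (a - m) * real (a choose m) = real a * real ((a - 1) choose m)"
    using binomial_absorb_comp[of a m] by (metis of_nat_mult)
  moreover have "0 < a choose m" using assms by simp
  ultimately show ?thesis using assms by (simp add: field_simps of_nat_diff)
qed

lemma choose_ratio_prod:
  fixes M m N :: nat
  assumes "N + m \<le> M"
  shows "real ((M - N) choose m) / real (M choose m) = (\<Prod>i<N. (real M - real m - real i) / (real M - real i))"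
  using assms
proof (induction N)
  case 0
  then show ?case by simp
next
  case (Suc N)
  have pos: "real ((M - N) choose m) \<noteq> 0" using Suc.prems by simp
  have "real (M - N) = real M - real N" using Suc.prems by (simp add: of_nat_diff)
  then have step: "real ((M - N - 1) choose m) / real ((M - N) choose m) = (real M - real m - real N) / (real M - real N)"
    using choose_pred_ratio[of m "M - N"] Suc.prems by simp
  have "real ((M - Suc N) choose m) / real (M choose m)
      = real ((M - N) choose m) / real (M choose m) * (real ((M - N - 1) choose m) / real ((M - N) choose m))"
    using pos by (simp add: field_simps)
  also have "\<dots> = (\<Prod>i<N. (real M - real m - real i) / (real M - real i))
                   * ((real M - real m - real N) / (real M - real N))"
    using Suc.prems by (simp only: Suc.IH step)
  finally show ?case by simp
qed

definition avoid_factor :: "real \<Rightarrow> nat \<Rightarrow> nat \<Rightarrow> real" where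
  "avoid_factor p n i = (real (n choose 2) - real (m_edges p n) - real i) / (real (n choose 2) - real i)"

lemma avoid_prob_eq_prod:
  "N + m_edges p n \<le> n choose 2 \<Longrightarrow> avoid_prob p n N = (\<Prod>i<N. avoid_factor p n i)"
  unfolding avoid_prob_def avoid_factor_def by (rule choose_ratio_prod)

lemma m_edges_bounds:
  assumes "0 \<le> p"
  shows "real (m_edges p n) \<le> p * real (n choose 2)" "p * real (n choose 2) - 1 \<le> real (m_edges p n)"
proof -
  have "real (m_edges p n) = of_int \<lfloor>p * real (n choose 2)\<rfloor>"
    using assms unfolding m_edges_def by simp
  then show "real (m_edges p n) \<le> p * real (n choose 2)" "p * real (n choose 2) - 1 \<le> real (m_edges p n)"
    by linarith+
qed

lemma avoid_factor_eq:
  assumes "i < n choose 2"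
  shows "avoid_factor p n i
           = (1 - p) - (p * real i - (p * real (n choose 2) - real (m_edges p n))) / (real (n choose 2) - real i)"
  using assms unfolding avoid_factor_def by (simp add: field_simps)

lemma shifted_ratio_diff_le:
  fixes p x x' i D n :: real
  assumes "0 \<le> p" "p \<le> 1" "0 \<le> x" "x \<le> 1" "0 \<le> x'" "x' \<le> 1" "0 \<le> i" "0 < D" "0 \<le> n"
  shows "\<bar>(p * i - x) / D - (p * i - x') / (D + n)\<bar> \<le> i * n / D\<^sup>2 + 1 / D"
proof -
  have "D \<noteq> 0" "D + n \<noteq> 0" using assms by auto
  then have "p * i / D - p * i / (D + n) = p * i * n / (D * (D + n))"
    by (simp add: diff_frac_eq algebra_simps)
  then have "(p * i - x) / D - (p * i - x') / (D + n) = p * i * n / (D * (D + n)) - x / D + x' / (D + n)"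
    by (simp only: diff_divide_distrib)
  moreover have "0 \<le> p * i * n / (D * (D + n))" using assms by simp
  moreover have "p * i * n / (D * (D + n)) \<le> i * n / D\<^sup>2"
    using assms mult_left_le_one_le[of i p]
    by (intro frac_le mult_right_mono) (auto simp: power2_eq_square mult_left_mono)
  moreover have "x / D \<le> 1 / D" "x' / (D + n) \<le> 1 / D" "0 \<le> x / D" "0 \<le> x' / (D + n)"
    using assms by (auto intro: divide_right_mono frac_le)
  ultimately show ?thesis by (simp add: abs_le_iff)
qed

lemma avoid_factor_deviation:
  assumes "0 \<le> p" "p \<le> 1" "i < n choose 2"
  shows "\<bar>avoid_factor p n i - (1 - p)\<bar> \<le> (real i + 1) / (real (n choose 2) - real i)"
proof -
  let ?x = "p * real (n choose 2) - real (m_edges p n)"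
  have "0 \<le> p * real i" "p * real i \<le> real i"
    using assms(1,2) mult_left_le_one_le[of "real i" p] by auto
  then have "\<bar>p * real i - ?x\<bar> \<le> real i + 1"
    using m_edges_bounds[OF assms(1), of n] unfolding abs_le_iff by linarith
  then show ?thesis
    using assms(3) unfolding avoid_factor_eq[OF assms(3)] by (simp add: abs_div divide_right_mono)
qed

lemma avoid_factor_Suc_deviation:
  assumes "0 \<le> p" "p \<le> 1" "i < n choose 2"
  shows "\<bar>avoid_factor p (Suc n) i - avoid_factor p n i\<bar>
           \<le> real i * real n / (real (n choose 2) - real i)\<^sup>2 + 1 / (real (n choose 2) - real i)"
proof -
  have M': "real (Suc n choose 2) = real (n choose 2) + real n" by (simp add: Suc_choose_two)
  have i': "i < Suc n choose 2" using assms(3) by (simp add: Suc_choose_two)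
  have "avoid_factor p (Suc n) i - avoid_factor p n i
      = (p * real i - (p * real (n choose 2) - real (m_edges p n))) / (real (n choose 2) - real i)
        - (p * real i - (p * real (Suc n choose 2) - real (m_edges p (Suc n))))
          / ((real (n choose 2) - real i) + real n)"
    unfolding avoid_factor_eq[OF assms(3)] avoid_factor_eq[OF i'] M' by (simp add: algebra_simps)
  also have "\<bar>\<dots>\<bar> \<le> real i * real n / (real (n choose 2) - real i)\<^sup>2 + 1 / (real (n choose 2) - real i)"
    using assms m_edges_bounds[OF assms(1), of n] m_edges_bounds[OF assms(1), of "Suc n"]
    by (intro shifted_ratio_diff_le) auto
  finally show ?thesis .
qed

lemma prod_close_bounds:
  fixes a b :: "'i \<Rightarrow> real"
  assumes "finite A" "0 \<le> e" "real (card A) * e \<le> 1 / 2"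
    and close: "\<And>i. i \<in> A \<Longrightarrow> 0 \<le> a i \<and> \<bar>b i - a i\<bar> \<le> e * a i"
  shows "prod a A / 2 \<le> prod b A \<and> prod b A \<le> 2 * prod a A"
proof (cases "A = {}")
  case False
  then have "1 \<le> real (card A)" using assms(1) by (simp add: Suc_le_eq card_gt_0_iff)
  then have "e \<le> real (card A) * e" using assms(2) by (metis mult_left_mono mult.commute mult_1)
  then have e1: "e \<le> 1" using assms(3) by linarith
  have factor: "0 \<le> a i * (1 - e) \<and> a i * (1 - e) \<le> b i \<and> b i \<le> a i * (1 + e)" if "i \<in> A" for i
  proof -
    have "0 \<le> a i" "\<bar>b i - a i\<bar> \<le> e * a i" using close[OF that] by auto
    moreover have "0 \<le> a i * (1 - e)" using \<open>0 \<le> a i\<close> e1 by simp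
    ultimately show ?thesis by (simp add: algebra_simps abs_le_iff)
  qed
  have "1 + real (card A) * (- e) \<le> (1 + (- e)) ^ card A"
    using e1 by (intro Bernoulli_inequality) simp
  then have lower: "1 / 2 \<le> (1 - e) ^ card A" using assms(3) by simp
  have "(1 + e) ^ card A \<le> exp e ^ card A" using assms(2) by (intro power_mono) auto
  also have "\<dots> = exp (real (card A) * e)" by (simp add: exp_of_nat_mult)
  also have "\<dots> \<le> exp (1 / 2)" using assms(3) by simp
  also have "\<dots> \<le> 2" by (rule exp_half_le2)
  finally have upper: "(1 + e) ^ card A \<le> 2" .
  have nonneg: "0 \<le> prod a A" using close by (simp add: prod_nonneg)
  have "prod a A * (1 / 2) \<le> prod a A * (1 - e) ^ card A"
    using lower nonneg by (rule mult_left_mono)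
  also have "\<dots> = prod (\<lambda>i. a i * (1 - e)) A" by (simp add: prod.distrib)
  also have "\<dots> \<le> prod b A" using factor by (intro prod_mono) auto
  finally have "prod a A / 2 \<le> prod b A" by simp
  moreover have "prod b A \<le> prod (\<lambda>i. a i * (1 + e)) A"
    using factor by (intro prod_mono) (auto intro: order_trans)
  moreover have "prod (\<lambda>i. a i * (1 + e)) A \<le> prod a A * 2"
    using upper nonneg by (simp add: prod.distrib mult_left_mono)
  ultimately show ?thesis by simp
qed simp

lemma real_choose_two: "real (n choose 2) = real n * (real n - 1) / 2"
  by (induction n) (simp_all add: Suc_choose_two field_simps)

(* q stands for floor(n/k) and N for the number of pairs inside parts. *)
locale small_parts =
  fixes p :: real and n N q :: nat
  assumes p: "0 < p" "p < 1"
    and N_le: "2 * N \<le> n * (q + 1)"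
    and q_small: "100 * (real q + 1)\<^sup>2 \<le> (1 - p) * real n"
begin

lemma linear_q_small: "100 * (real q + 1) \<le> (1 - p) * real n"
proof -
  have "real q + 1 \<le> (real q + 1)\<^sup>2" by (simp add: power2_eq_square)
  then have "100 * (real q + 1) \<le> 100 * (real q + 1)\<^sup>2" by simp
  then show ?thesis using q_small by (rule order_trans)
qed

lemma n_ge_100: "100 \<le> real n"
  using linear_q_small p mult_left_le_one_le[of "real n" "1 - p"] by simp

lemma index_bound: "real N + real q \<le> real n * (real q + 1)"
proof -
  have "real (2 * N) \<le> real (n * (q + 1))" using N_le by (simp only: of_nat_le_iff)
  then have "2 * real N \<le> real n * (real q + 1)" by (simp add: algebra_simps)
  moreover have "2 * (real q + 1) \<le> real n * (real q + 1)"
    using n_ge_100 by (intro mult_right_mono) auto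
  ultimately show ?thesis by (smt (verit))
qed

lemma pairs_left_ge:
  assumes "real i \<le> real n * (real q + 1)"
  shows "real n ^ 2 / 5 \<le> real (n choose 2) - real i"
proof -
  have "100 * (real q + 1) \<le> real n"
    using linear_q_small p mult_left_le_one_le[of "real n" "1 - p"] by simp
  then have "real n * (100 * (real q + 1)) \<le> real n * real n" by (intro mult_left_mono) auto
  then have "100 * real i \<le> real n ^ 2" using assms by (simp add: power2_eq_square algebra_simps)
  moreover have "100 * real n \<le> real n ^ 2"
    using n_ge_100 by (simp add: power2_eq_square mult_right_mono)
  moreover have "real (n choose 2) = real n ^ 2 / 2 - real n / 2"
    by (simp add: real_choose_two power2_eq_square field_simps)
  moreover have "0 \<le> real n" by simp
  ultimately show ?thesis by linarith
qed

lemma avoid_factor_bounds: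
  assumes "i < N + q"
  shows "\<bar>avoid_factor p n i - (1 - p)\<bar> \<le> 5 * (real q + 1) / real n"
    and "\<bar>avoid_factor p (Suc n) i - (1 - p)\<bar> \<le> 5 * (real q + 1) / real n"
    and "\<bar>avoid_factor p (Suc n) i - avoid_factor p n i\<bar> \<le> 30 * (real q + 1) / real n ^ 2"
proof -
  define Q where "Q = real q + 1"
  define D where "D = real (n choose 2) - real i"
  have i1: "real i + 1 \<le> real n * Q" using assms index_bound unfolding Q_def by linarith
  have "real i \<le> real n * (real q + 1)" using i1 unfolding Q_def by linarith
  then have D: "real n ^ 2 / 5 \<le> D" unfolding D_def by (rule pairs_left_ge)
  have n0: "0 < real n" using n_ge_100 by linarith
  then have D0: "0 < D" using D by (smt (verit) divide_pos_pos zero_less_power)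
  then have i_less: "i < n choose 2" unfolding D_def by simp
  have i_less': "i < Suc n choose 2" using i_less by (simp add: Suc_choose_two)
  have "(real i + 1) / D \<le> (real n * Q) / (real n ^ 2 / 5)"
    using i1 D D0 n0 by (intro frac_le) auto
  also have "\<dots> = 5 * Q / real n" using n0 by (simp add: power2_eq_square field_simps)
  finally have dev: "(real i + 1) / D \<le> 5 * Q / real n" .
  have "(real i + 1) / (real (Suc n choose 2) - real i) \<le> (real i + 1) / D"
    using D0 unfolding D_def by (intro divide_left_mono) (auto simp: Suc_choose_two)
  then show "\<bar>avoid_factor p n i - (1 - p)\<bar> \<le> 5 * (real q + 1) / real n"
    and "\<bar>avoid_factor p (Suc n) i - (1 - p)\<bar> \<le> 5 * (real q + 1) / real n"
    using avoid_factor_deviation[of p i n] avoid_factor_deviation[of p i "Suc n"] p dev i_less i_less'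
    unfolding D_def Q_def by auto
  have "real i * real n / D\<^sup>2 \<le> (real n * Q) * real n / (real n ^ 2 / 5)\<^sup>2"
    using i1 D D0 n0 by (intro frac_le mult_right_mono power_mono) auto
  also have "\<dots> = 25 * Q / real n ^ 2" using n0 by (simp add: power2_eq_square field_simps)
  finally have "real i * real n / D\<^sup>2 \<le> 25 * Q / real n ^ 2" .
  moreover have "1 / D \<le> 5 * Q / real n ^ 2"
  proof -
    have "1 / D \<le> 1 / (real n ^ 2 / 5)" using D D0 n0 by (intro frac_le) auto
    also have "\<dots> \<le> 5 * Q / real n ^ 2" using n0 by (simp add: Q_def field_simps)
    finally show ?thesis .
  qed
  ultimately have "\<bar>avoid_factor p (Suc n) i - avoid_factor p n i\<bar> \<le> 25 * Q / real n ^ 2 + 5 * Q / real n ^ 2"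
    using avoid_factor_Suc_deviation[of p i n] p i_less unfolding D_def by simp
  also have "\<dots> = 30 * Q / real n ^ 2" by (simp add: add_divide_distrib[symmetric])
  finally show "\<bar>avoid_factor p (Suc n) i - avoid_factor p n i\<bar> \<le> 30 * (real q + 1) / real n ^ 2"
    unfolding Q_def .
qed

lemma edges_fit: "N + m_edges p n \<le> n choose 2" "N + q + m_edges p (Suc n) \<le> Suc n choose 2"
proof -
  have "real n * (100 * (real q + 1)) \<le> real n * ((1 - p) * real n)"
    using linear_q_small by (intro mult_left_mono) auto
  then have "100 * (real n * (real q + 1)) \<le> (1 - p) * real n ^ 2"
    by (simp add: power2_eq_square algebra_simps)
  moreover have "0 \<le> real n * (real q + 1)" by simp
  ultimately have "real n * (real q + 1) \<le> (1 - p) * (real n ^ 2 / 5)" by linarith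
  also have "\<dots> \<le> (1 - p) * real (n choose 2)"
    using pairs_left_ge[of 0] p by (intro mult_left_mono) simp_all
  finally have "real N + real q \<le> real (n choose 2) - p * real (n choose 2)"
    using index_bound by (simp add: algebra_simps)
  moreover have "real (Suc n choose 2) = real (n choose 2) + real n" by (simp add: Suc_choose_two)
  moreover have "p * real (Suc n choose 2) \<le> p * real (n choose 2) + real n"
    using p mult_left_le_one_le[of "real n" p] by (simp add: Suc_choose_two algebra_simps)
  ultimately have "real (N + m_edges p n) \<le> real (n choose 2)"
    and "real (N + q + m_edges p (Suc n)) \<le> real (Suc n choose 2)"
    using m_edges_bounds(1)[of p n] m_edges_bounds(1)[of p "Suc n"] p unfolding of_nat_add by linarith+
  then show "N + m_edges p n \<le> n choose 2" "N + q + m_edges p (Suc n) \<le> Suc n choose 2"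
    by (simp_all only: of_nat_le_iff)
qed

lemma head_prod_bounds:
  shows "0 < (\<Prod>i<N. avoid_factor p n i)"
    and "(\<Prod>i<N. avoid_factor p n i) / 2 \<le> (\<Prod>i<N. avoid_factor p (Suc n) i)"
    and "(\<Prod>i<N. avoid_factor p (Suc n) i) \<le> 2 * (\<Prod>i<N. avoid_factor p n i)"
proof -
  define Q where "Q = real q + 1"
  define eps where "eps = 60 * Q / ((1 - p) * real n ^ 2)"
  have n0: "0 < real n" using n_ge_100 by linarith
  have eps0: "0 \<le> eps" unfolding eps_def Q_def using p by simp
  have "5 * Q / real n \<le> ((1 - p) * real n / 20) / real n"
    using linear_q_small n0 unfolding Q_def by (intro divide_right_mono) auto
  then have small: "5 * Q / real n \<le> (1 - p) / 20" using n0 by simp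
  have eq: "30 * Q / real n ^ 2 = eps * ((1 - p) / 2)" unfolding eps_def using p n0 by (simp add: field_simps)
  have factor: "(1 - p) / 2 \<le> avoid_factor p n i
      \<and> \<bar>avoid_factor p (Suc n) i - avoid_factor p n i\<bar> \<le> eps * avoid_factor p n i" if "i < N" for i
  proof -
    from that have "i < N + q" by simp
    note bounds = avoid_factor_bounds[OF this, folded Q_def]
    have low: "(1 - p) / 2 \<le> avoid_factor p n i" using bounds(1) small p unfolding abs_diff_le_iff diff_divide_distrib by linarith
    then have "eps * ((1 - p) / 2) \<le> eps * avoid_factor p n i" using eps0 by (rule mult_left_mono)
    then show ?thesis using low bounds(3) eq by linarith
  qed
  have "real (2 * N) \<le> real (n * (q + 1))" using N_le by (simp only: of_nat_le_iff)
  then have "real N \<le> real n * Q / 2" unfolding Q_def by (simp add: algebra_simps)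
  then have "real N * eps \<le> (real n * Q / 2) * eps" using eps0 by (rule mult_right_mono)
  also have "\<dots> = 30 * Q\<^sup>2 / ((1 - p) * real n)"
    unfolding eps_def using n0 p by (simp add: field_simps power2_eq_square)
  also have "\<dots> \<le> 30 * ((1 - p) * real n / 100) / ((1 - p) * real n)"
    using q_small p n0 unfolding Q_def by (intro divide_right_mono) (auto simp: mult.commute)
  also have "\<dots> \<le> 1 / 2" using p n0 by simp
  finally have "real (card {..<N}) * eps \<le> 1 / 2" by simp
  then have "(\<Prod>i<N. avoid_factor p n i) / 2 \<le> (\<Prod>i<N. avoid_factor p (Suc n) i)
      \<and> (\<Prod>i<N. avoid_factor p (Suc n) i) \<le> 2 * (\<Prod>i<N. avoid_factor p n i)"
    using factor p eps0 by (intro prod_close_bounds) (auto intro: order_trans[of 0 "(1 - p) / 2"])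
  then show "(\<Prod>i<N. avoid_factor p n i) / 2 \<le> (\<Prod>i<N. avoid_factor p (Suc n) i)"
    and "(\<Prod>i<N. avoid_factor p (Suc n) i) \<le> 2 * (\<Prod>i<N. avoid_factor p n i)" by auto
  show "0 < (\<Prod>i<N. avoid_factor p n i)"
    using factor p by (intro prod_pos) (auto intro: less_le_trans[of 0 "(1 - p) / 2"])
qed

lemma tail_prod_bounds:
  shows "(1 - p) ^ q / 2 \<le> (\<Prod>i\<in>{N..<N + q}. avoid_factor p (Suc n) i)"
    and "(\<Prod>i\<in>{N..<N + q}. avoid_factor p (Suc n) i) \<le> 2 * (1 - p) ^ q"
proof -
  define Q where "Q = real q + 1"
  define d where "d = 5 * Q / ((1 - p) * real n)"
  have n0: "0 < real n" using n_ge_100 by linarith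
  have d0: "0 \<le> d" unfolding d_def Q_def using p by simp
  have "d * (1 - p) = 5 * Q / real n" unfolding d_def using p by simp
  then have factor: "0 \<le> 1 - p \<and> \<bar>avoid_factor p (Suc n) i - (1 - p)\<bar> \<le> d * (1 - p)"
    if "i \<in> {N..<N + q}" for i
    using avoid_factor_bounds(2)[of i] that p unfolding Q_def by simp
  have "real q * d \<le> Q * d" unfolding Q_def using d0 by (intro mult_right_mono) auto
  also have "\<dots> = 5 * Q\<^sup>2 / ((1 - p) * real n)" unfolding d_def by (simp add: power2_eq_square)
  also have "\<dots> \<le> 5 * ((1 - p) * real n / 100) / ((1 - p) * real n)"
    using q_small p n0 unfolding Q_def by (intro divide_right_mono) (auto simp: mult.commute)
  also have "\<dots> \<le> 1 / 2" using p n0 by simp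
  finally have "real (card {N..<N + q}) * d \<le> 1 / 2" by simp
  then have "(\<Prod>i\<in>{N..<N + q}. 1 - p) / 2 \<le> (\<Prod>i\<in>{N..<N + q}. avoid_factor p (Suc n) i)
      \<and> (\<Prod>i\<in>{N..<N + q}. avoid_factor p (Suc n) i) \<le> 2 * (\<Prod>i\<in>{N..<N + q}. 1 - p)"
    using factor d0 by (intro prod_close_bounds) auto
  then show "(1 - p) ^ q / 2 \<le> (\<Prod>i\<in>{N..<N + q}. avoid_factor p (Suc n) i)"
    and "(\<Prod>i\<in>{N..<N + q}. avoid_factor p (Suc n) i) \<le> 2 * (1 - p) ^ q" by auto
qed

lemma avoid_prob_Suc_bounds:
  shows "0 < avoid_prob p n N"
    and "(1 - p) ^ q / 4 * avoid_prob p n N \<le> avoid_prob p (Suc n) (N + q)"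
    and "avoid_prob p (Suc n) (N + q) \<le> 4 * (1 - p) ^ q * avoid_prob p n N"
proof -
  let ?A = "\<Prod>i<N. avoid_factor p n i"
  let ?H = "\<Prod>i<N. avoid_factor p (Suc n) i"
  let ?T = "\<Prod>i\<in>{N..<N + q}. avoid_factor p (Suc n) i"
  have A: "avoid_prob p n N = ?A" using edges_fit(1) by (rule avoid_prob_eq_prod)
  have "avoid_prob p (Suc n) (N + q) = (\<Prod>i<N + q. avoid_factor p (Suc n) i)"
    using edges_fit(2) by (intro avoid_prob_eq_prod) simp
  also have "\<dots> = ?H * ?T" by (simp add: prod.atLeastLessThan_concat[symmetric] lessThan_atLeast0)
  finally have HT: "avoid_prob p (Suc n) (N + q) = ?H * ?T" .
  have pq: "0 \<le> (1 - p) ^ q" using p by simp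
  show "0 < avoid_prob p n N" unfolding A by (rule head_prod_bounds(1))
  have "(?A / 2) * ((1 - p) ^ q / 2) \<le> ?H * ?T"
    using head_prod_bounds tail_prod_bounds pq by (intro mult_mono) auto
  then show "(1 - p) ^ q / 4 * avoid_prob p n N \<le> avoid_prob p (Suc n) (N + q)"
    unfolding A HT by (simp add: algebra_simps)
  have "?H * ?T \<le> (2 * ?A) * (2 * (1 - p) ^ q)"
    using head_prod_bounds tail_prod_bounds pq by (intro mult_mono) auto
  then show "avoid_prob p (Suc n) (N + q) \<le> 4 * (1 - p) ^ q * avoid_prob p n N"
    unfolding A HT by (simp add: algebra_simps)
qed

end

lemma mu_Suc_ratio_bounds:
  assumes p: "0 < p" "p < 1" and k: "0 < k"
    and q_small: "100 * (real (n div k) + 1)\<^sup>2 \<le> (1 - p) * real n"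
  shows "(1 - p) ^ (n div k) * ((real n + 1) / (real (n div k) + 1)) / 4 \<le> mu p (Suc n) k / mu p n k"
    and "mu p (Suc n) k / mu p n k \<le> 4 * ((1 - p) ^ (n div k) * ((real n + 1) / (real (n div k) + 1)))"
proof -
  let ?q = "n div k" and ?N = "intra_part_pairs n k"
  let ?E = "real (card (equipartitions n k))" and ?E' = "real (card (equipartitions (Suc n) k))"
  let ?a = "avoid_prob p n ?N" and ?a' = "avoid_prob p (Suc n) (?N + ?q)"
  have "2 * ?N \<le> n * (?q + 1)" using intra_part_pairs_le[OF k, of n] by (simp add: algebra_simps)
  then interpret small_parts p n ?N ?q using p q_small by unfold_locales
  note bounds = avoid_prob_Suc_bounds
  have E: "0 < ?E" using card_equipartitions_pos[OF k] by simp
  have "?E' * (real ?q + 1) = ?E * (real n + 1)"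
    using arg_cong[OF card_equipartitions_Suc[OF k, of n], of real] by (simp add: algebra_simps)
  then have E': "?E' = ?E * ((real n + 1) / (real ?q + 1))" by (simp add: field_simps)
  have "mu p (Suc n) k / mu p n k = (?E' * ?a') / (?E * ?a)"
    using p by (simp add: mu_eq_avoid_prob intra_part_pairs_Suc[OF k])
  also have "\<dots> = (real n + 1) / (real ?q + 1) * (?a' / ?a)"
    unfolding E' using E by simp
  finally have ratio: "mu p (Suc n) k / mu p n k = (real n + 1) / (real ?q + 1) * (?a' / ?a)" .
  have r: "0 \<le> (real n + 1) / (real ?q + 1)" by simp
  have "(1 - p) ^ ?q / 4 \<le> ?a' / ?a" "?a' / ?a \<le> 4 * (1 - p) ^ ?q"
    using bounds by (simp_all add: field_simps)
  from mult_left_mono[OF this(1) r] mult_left_mono[OF this(2) r]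
  show "(1 - p) ^ ?q * ((real n + 1) / (real ?q + 1)) / 4 \<le> mu p (Suc n) k / mu p n k"
    and "mu p (Suc n) k / mu p n k \<le> 4 * ((1 - p) ^ ?q * ((real n + 1) / (real ?q + 1)))"
    unfolding ratio by (simp_all add: algebra_simps)
qed

section \<open>Asymptotics\<close>

lemma powr_bigtheta_of_bounded_diff:
  fixes a :: real and f g :: "'a \<Rightarrow> real"
  assumes "0 < a" and "(\<lambda>x. f x - g x) \<in> O[F](\<lambda>_. 1)"
  shows "(\<lambda>x. a powr f x) \<in> \<Theta>[F](\<lambda>x. a powr g x)"
proof -
  obtain B where bound: "eventually (\<lambda>x. \<bar>f x - g x\<bar> \<le> B) F"
    using assms(2) by (auto elim!: landau_o.bigE)
  define C where "C = exp (\<bar>ln a\<bar> * B)"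
  have "eventually (\<lambda>x. inverse C * norm (a powr g x) \<le> norm (a powr f x)
                       \<and> norm (a powr f x) \<le> C * norm (a powr g x)) F"
    using bound
  proof eventually_elim
    case (elim x)
    have split: "a powr f x = exp (ln a * (f x - g x)) * a powr g x"
      using assms(1) by (simp add: powr_def exp_add[symmetric] algebra_simps)
    have "\<bar>ln a * (f x - g x)\<bar> \<le> \<bar>ln a\<bar> * B"
      using elim by (simp add: abs_mult mult_left_mono)
    then have "inverse C \<le> exp (ln a * (f x - g x))" "exp (ln a * (f x - g x)) \<le> C"
      unfolding C_def by (auto simp: exp_minus[symmetric])
    then show ?case unfolding split by (auto simp: mult_right_mono)
  qed
  then show ?thesis by (intro bigthetaI') (simp_all add: C_def)
qed

lemma powr_gamma_fn:
  assumes "0 < p" "p < 1" "2 \<le> n"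
  shows "(1 - p) powr gamma_fn p n = 4 * log (1 / (1 - p)) (real n) ^ 2 / real n ^ 2"
proof -
  define b where "b = 1 / (1 - p)"
  define L where "L = log b n"
  have b: "1 < b" using assms unfolding b_def by simp
  have L: "0 < L" unfolding L_def using b assms(3) by simp
  have "log b 4 = 2 * log b 2" using log_nat_power[of 2 b 2] by simp
  then have "- gamma_fn p n = log b (4 * L ^ 2 / real n ^ 2)"
    using b L assms(3) unfolding gamma_fn_def Let_def b_def[symmetric] L_def[symmetric]
    by (simp add: log_mult log_divide log_nat_power L_def[symmetric])
  moreover have "1 - p = inverse b" unfolding b_def by simp
  ultimately have "(1 - p) powr gamma_fn p n = b powr log b (4 * L ^ 2 / real n ^ 2)"
    by (simp add: inverse_powr powr_minus[symmetric])
  also have "\<dots> = 4 * L ^ 2 / real n ^ 2" using b L assms(3) by simp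
  finally show ?thesis unfolding L_def b_def .
qed

lemma powr_gamma_fn_bigtheta:
  assumes "0 < p" "p < 1"
  shows "(\<lambda>n. (1 - p) powr gamma_fn p n) \<in> \<Theta>(\<lambda>n. (ln (real n) / real n) ^ 2)"
proof -
  have "(\<lambda>n. (1 - p) powr gamma_fn p n) \<in> \<Theta>(\<lambda>n. 4 * log (1 / (1 - p)) (real n) ^ 2 / real n ^ 2)"
    using assms by (intro bigthetaI_cong eventually_mono[OF eventually_ge_at_top[of 2]]) (simp add: powr_gamma_fn)
  also have "(\<lambda>n. 4 * log (1 / (1 - p)) (real n) ^ 2 / real n ^ 2) \<in> \<Theta>(\<lambda>n. (ln (real n) / real n) ^ 2)"
  proof -
    have "0 < ln (1 / (1 - p))" using assms by simp
    then show ?thesis unfolding log_def by real_asymp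
  qed
  finally show ?thesis .
qed

lemma gamma_fn_bigtheta:
  assumes "0 < p" "p < 1"
  shows "gamma_fn p \<in> \<Theta>(\<lambda>n. ln (real n))"
proof -
  have "0 < ln (1 / (1 - p))" using assms by simp
  then show ?thesis unfolding gamma_fn_def Let_def log_def by real_asymp
qed


lemma bigtheta_ln_of_near_gamma:
  assumes "0 < p" "p < 1" and near: "(\<lambda>n. f n - gamma_fn p n) \<in> O(\<lambda>_. 1)"
  shows "f \<in> \<Theta>(\<lambda>n. ln (real n))"
proof -
  have "(\<lambda>_. 1) \<in> o(\<lambda>n. ln (real n))" by real_asymp
  then have "(\<lambda>_. 1) \<in> o(gamma_fn p)"
    using landau_o.small.cong_bigtheta[OF gamma_fn_bigtheta[OF assms(1,2)]] by simp
  with near have "(\<lambda>n. f n - gamma_fn p n) \<in> o(gamma_fn p)"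
    by (rule landau_o.big_small_trans)
  then have "\<Theta>(\<lambda>n. (f n - gamma_fn p n) + gamma_fn p n) = \<Theta>(gamma_fn p)"
    by (rule landau_theta.plus_absorb1)
  then have "\<Theta>(f) = \<Theta>(gamma_fn p)" by simp
  then have "f \<in> \<Theta>(gamma_fn p)" using bigtheta_refl[of f at_top] by blast
  then show ?thesis using gamma_fn_bigtheta[OF assms(1,2)] by (rule landau_theta.trans)
qed

lemma succ_bigtheta_ln_of_near_gamma:
  fixes q :: "nat \<Rightarrow> nat"
  assumes "0 < p" "p < 1" and near: "(\<lambda>n. real (q n) - gamma_fn p n) \<in> O(\<lambda>_. 1)"
  shows "(\<lambda>n. real (q n) + 1) \<in> \<Theta>(\<lambda>n. ln (real n))"
proof -
  have "(\<lambda>n. real (q n) + 1 - gamma_fn p n) \<in> O(\<lambda>_. 1)"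
    using sum_in_bigo(1)[OF near, of "\<lambda>_. 1"] by (simp add: algebra_simps)
  with assms(1,2) show ?thesis by (rule bigtheta_ln_of_near_gamma)
qed

lemma eventually_square_le_of_bigtheta_ln:
  assumes "f \<in> \<Theta>(\<lambda>n. ln (real n))" "0 < c"
  shows "eventually (\<lambda>n. f n ^ 2 \<le> c * real n) at_top"
proof -
  have "(\<lambda>n. f n ^ 2) \<in> O(\<lambda>n. ln (real n) ^ 2)"
    using assms(1) by (intro landau_o.big_power) auto
  moreover have "(\<lambda>n. ln (real n) ^ 2) \<in> o(\<lambda>n. real n)" by real_asymp
  ultimately have "(\<lambda>n. f n ^ 2) \<in> o(\<lambda>n. real n)" by (rule landau_o.big_small_trans)
  from landau_o.smallD[OF this assms(2)] show ?thesis by simp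
qed

lemma div_minus_divide_bigo: "(\<lambda>n. real (n div k n) - real n / real (k n)) \<in> O(\<lambda>_. 1)"
proof (rule bigoI[of _ 1])
  have "\<bar>real (n div k n) - real n / real (k n)\<bar> \<le> 1" for n
  proof -
    have "real (n div k n) = of_int \<lfloor>real n / real (k n)\<rfloor>" by (simp add: floor_divide_of_nat_eq)
    then show ?thesis using of_int_floor_le[of "real n / real (k n)"]
        real_of_int_floor_gt_diff_one[of "real n / real (k n)"] by linarith
  qed
  then show "eventually (\<lambda>n. norm (real (n div k n) - real n / real (k n)) \<le> 1 * norm (1::real)) at_top"
    by simp
qed

lemma bigtheta_of_sandwich:
  fixes f g :: "'a \<Rightarrow> real"
  assumes "eventually (\<lambda>x. g x / 4 \<le> f x \<and> f x \<le> 4 * g x) F"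
  shows "f \<in> \<Theta>[F](g)"
proof (rule bigthetaI'[of "1 / 4" 4])
  show "eventually (\<lambda>x. 1 / 4 * norm (g x) \<le> norm (f x) \<and> norm (f x) \<le> 4 * norm (g x)) F"
    using assms by eventually_elim auto
qed simp_all

lemma ratio_main_term_bigtheta:
  fixes q :: "nat \<Rightarrow> nat"
  assumes "0 < p" "p < 1" and near: "(\<lambda>n. real (q n) - gamma_fn p n) \<in> O(\<lambda>_. 1)"
  shows "(\<lambda>n. (1 - p) ^ q n * ((real n + 1) / (real (q n) + 1))) \<in> \<Theta>(\<lambda>n. ln (real n) / real n)"
proof -
  have "(\<lambda>n. (1 - p) powr real (q n)) \<in> \<Theta>(\<lambda>n. (1 - p) powr gamma_fn p n)"
    using assms by (intro powr_bigtheta_of_bounded_diff) auto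
  also have "(\<lambda>n. (1 - p) powr gamma_fn p n) \<in> \<Theta>(\<lambda>n. (ln (real n) / real n) ^ 2)"
    using assms(1,2) by (rule powr_gamma_fn_bigtheta)
  finally have pow: "(\<lambda>n. (1 - p) ^ q n) \<in> \<Theta>(\<lambda>n. (ln (real n) / real n) ^ 2)"
    using assms(2) by (simp add: powr_realpow)
  have "(\<lambda>n. real (q n) + 1) \<in> \<Theta>(\<lambda>n. ln (real n))"
    using assms(1,2) near by (rule succ_bigtheta_ln_of_near_gamma)
  moreover have "(\<lambda>n. real n + 1) \<in> \<Theta>(\<lambda>n. real n)" by real_asymp
  moreover have "eventually (\<lambda>n. ln (real n) \<noteq> 0) at_top"
    by (rule eventually_mono[OF eventually_gt_at_top[of 1]]) simp
  ultimately have frac: "(\<lambda>n. (real n + 1) / (real (q n) + 1)) \<in> \<Theta>(\<lambda>n. real n / ln (real n))"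
    by (intro landau_theta.divide) (auto simp: bigtheta_sym add_pos_nonneg)
  have "(\<lambda>n. (1 - p) ^ q n * ((real n + 1) / (real (q n) + 1))) \<in> \<Theta>(\<lambda>n. (ln (real n) / real n) ^ 2 * (real n / ln (real n)))"
    using pow frac by (rule landau_theta.mult)
  also have "(\<lambda>n. (ln (real n) / real n) ^ 2 * (real n / ln (real n))) \<in> \<Theta>(\<lambda>n. ln (real n) / real n)"
    by real_asymp
  finally show ?thesis .
qed

theorem lemma4:
  fixes p :: real and k :: "nat \<Rightarrow> nat"
  assumes "0 < p" and "p < 1 - 1 / exp 2"
    and "\<And>n. 0 < k n"
    and "(\<lambda>n. real n / real (k n) - gamma_fn p n) \<in> O(\<lambda>_. 1)"
  shows "(\<lambda>n. mu p (n + 1) (k n) / mu p n (k n)) \<in> \<Theta>(\<lambda>n. ln (real n) / real n)"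
proof -
  have p: "0 < p" "p < 1" using assms(1,2) by (auto intro: order.strict_trans2[of _ "1 - 1 / exp 2"])
  define q where "q n = n div k n" for n
  have near: "(\<lambda>n. real (q n) - gamma_fn p n) \<in> O(\<lambda>_. 1)"
    using sum_in_bigo(1)[OF div_minus_divide_bigo[of k] assms(4)] unfolding q_def by simp
  have "eventually (\<lambda>n. (real (q n) + 1) ^ 2 \<le> (1 - p) / 100 * real n) at_top"
    using p by (intro eventually_square_le_of_bigtheta_ln succ_bigtheta_ln_of_near_gamma[OF p near]) simp
  then have "eventually (\<lambda>n. (1 - p) ^ q n * ((real n + 1) / (real (q n) + 1)) / 4
                 \<le> mu p (n + 1) (k n) / mu p n (k n)
               \<and> mu p (n + 1) (k n) / mu p n (k n)
                 \<le> 4 * ((1 - p) ^ q n * ((real n + 1) / (real (q n) + 1)))) at_top"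
    by eventually_elim (use p assms(3) mu_Suc_ratio_bounds in \<open>auto simp: q_def\<close>)
  then have "(\<lambda>n. mu p (n + 1) (k n) / mu p n (k n))
               \<in> \<Theta>(\<lambda>n. (1 - p) ^ q n * ((real n + 1) / (real (q n) + 1)))"
    by (rule bigtheta_of_sandwich)
  also have "(\<lambda>n. (1 - p) ^ q n * ((real n + 1) / (real (q n) + 1))) \<in> \<Theta>(\<lambda>n. ln (real n) / real n)"
    using p near by (rule ratio_main_term_bigtheta)
  finally show ?thesis .
qed

end
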